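(* Let $T_t$ be the special flow over the dyadic odometer on $M=[0,1)^2$ with Lebesgue measure $m$ (defined in the context). For each $n\in\mathbb{N}$ let $f_n:[0,2^{-n})\times[0,2^n)\to\mathbb{R}$ be measurable with $f_n\circ\Phi_n^{-1}\in L_1(M)$, such that (2) $\int_0^{2^n} f_n(u,v)\,dv=0$ for every $u\in[0,2^{-n})$, and (3) $\sum_{n=1}^\infty \|f_n\|_{\infty,1}<\infty$, where $\|f_n\|_{\infty,1}=\sup_{u\in[0,2^{-n})}\int_0^{2^n}|f_n(u,v)|\,dv$. Define $f(x,y)=\sum_{n=1}^\infty f_n(\Phi_n^{-1}(x,y))$. Then $f\in L_1(M)$, $\int_M f\,dm=0$, and for all $t>0$ and almost every $(x,y)\in M$, $$|A(f,t,(x,y))|\le \frac{2\sum_{n=1}^\infty\|f_n\|_{\infty,1}}{t}.$$ In particular $A(f,t,\cdot)\to 0$ uniformly with rate $\mathcal{O}(1/t)$.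
   Context: Dyadic odometer: $S:[0,1)\to[0,1)$ defined on $x=\sum_{i\ge1}x_i2^{-i}$ (binary expansion, $x_i\in\{0,1\}$, not eventually all $1$) by: if $x_1=\dots=x_m=1$ and $x_{m+1}=0$ ($m\ge0$), then $S$ replaces these first $m+1$ digits by $0,\dots,0,1$ and leaves the remaining digits unchanged. It preserves Lebesgue measure and is ergodic. The special flow over $S$ with constant return time $1$ is the flow on $M=[0,1)\times[0,1)$ given by $T_t(x,y)=(S^{\lfloor y+t\rfloor}x,\ y+t-\lfloor y+t\rfloor)$, $t\ge 0$; it preserves Lebesgue measure $m$ on $M$. For $p\in\mathbb{N}$, the map $\Phi_p:[0,2^{-p})\times[0,2^p)\to M$, $\Phi_p(u,v)=T_v(u,0)=(S^{\lfloor v\rfloor}u,\ v-\lfloor v\rfloor)$, is a measure-preserving bijection (mod 0); the coordinates $(x_p,y_p)=\Phi_p^{-1}(x,y)$ identify $M$ with the rectangle $[0,2^{-p})\times[0,2^p)$. Birkhoff average: $A(f,t,z)=\frac1t\int_0^t f(T_sz)\,ds$. *)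

theory Defs
  imports "HOL-Analysis.Analysis"
begin

text \<open>Binary digits x_i (i \<ge> 1) of x in [0,1), standard expansion (not eventually all 1).\<close>
definition bdigit :: "nat \<Rightarrow> real \<Rightarrow> nat" where
  "bdigit i x = nat \<lfloor>2 ^ i * x\<rfloor> mod 2"

definition lead_ones :: "real \<Rightarrow> nat" where
  "lead_ones x = (LEAST m. bdigit (Suc m) x = 0)"

definition odo_digit :: "real \<Rightarrow> nat \<Rightarrow> nat" where
  "odo_digit x i = (if i \<le> lead_ones x then 0
                    else if i = Suc (lead_ones x) then 1 else bdigit i x)"

definition odometer :: "real \<Rightarrow> real" where
  "odometer x = (\<Sum>i. real (odo_digit x (Suc i)) / 2 ^ Suc i)"

definition Msp :: "(real \<times> real) set" where
  "Msp = {0..<1} \<times> {0..<1}"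

text \<open>Special flow over S with constant roof 1 (for t \<ge> 0).\<close>
definition flow :: "real \<Rightarrow> real \<times> real \<Rightarrow> real \<times> real" where
  "flow t z = (case z of (x, y) \<Rightarrow>
      ((odometer ^^ nat \<lfloor>y + t\<rfloor>) x, y + t - of_int \<lfloor>y + t\<rfloor>))"

definition Rect :: "nat \<Rightarrow> (real \<times> real) set" where
  "Rect p = {0..<1 / 2 ^ p} \<times> {0..<2 ^ p}"

definition Phi :: "nat \<Rightarrow> real \<times> real \<Rightarrow> real \<times> real" where
  "Phi p z = (case z of (u, v) \<Rightarrow>
      ((odometer ^^ nat \<lfloor>v\<rfloor>) u, v - of_int \<lfloor>v\<rfloor>))"

definition Phi_inv :: "nat \<Rightarrow> real \<times> real \<Rightarrow> real \<times> real" where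
  "Phi_inv p = inv_into (Rect p) (Phi p)"

definition birkhoff_avg :: "(real \<times> real \<Rightarrow> real) \<Rightarrow> real \<Rightarrow> real \<times> real \<Rightarrow> real" where
  "birkhoff_avg f t z = (integral\<^sup>L (lebesgue_on {0..t}) (\<lambda>s. f (flow s z))) / t"

definition norm_inf_1 :: "nat \<Rightarrow> (real \<times> real \<Rightarrow> real) \<Rightarrow> ennreal" where
  "norm_inf_1 n g = (SUP u \<in> {0..<1 / 2 ^ n}.
      \<integral>\<^sup>+ v. ennreal \<bar>g (u, v)\<bar> \<partial>(lebesgue_on {0..<2 ^ n}))"

end

theory Submission
  imports Defs
begin

text \<open>In the coordinates \<open>(u, v)\<close> of \<open>Rect n\<close> the flow moves vertically with unit speed;
  whenever it leaves the top of the rectangle it reenters at the bottom with \<open>u\<close> replaced by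
  \<open>S^(2^n) u\<close>, which again lies in \<open>[0, 2^-n)\<close>. Along an orbit, \<open>f_n \<circ> Phi_n^-1\<close> is
  therefore a concatenation of vertical sections of \<open>f_n\<close>, each of mean zero and of \<open>L_1\<close>-norm
  at most \<open>||f_n||_(\<infinity>,1)\<close>. Whole sections integrate to zero, so the integral over \<open>[0, t]\<close>
  is bounded by the two incomplete sections at its ends, i.e. by \<open>2 ||f_n||_(\<infinity>,1)\<close>; summing
  over \<open>n\<close> gives the estimate.

  \<open>Phi_n\<close> translates each unit level of \<open>Rect n\<close> onto a vertical column of \<open>M\<close>, so it
  preserves Lebesgue measure, and Fubini's theorem on \<open>Rect n\<close> yields \<open>\<integral> f_n \<circ> Phi_n^-1 = 0\<close>
  and \<open>||f_n \<circ> Phi_n^-1||_1 \<le> ||f_n||_(\<infinity>,1)\<close>. Sections of a Lebesgue measurable function need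
  not be integrable everywhere; the exceptional orbits form a null set because \<open>S\<close> is a
  piecewise translation.\<close>

section \<open>Binary digits and the odometer\<close>

lemma bdigit_le_1: "bdigit i x \<le> 1"
  unfolding bdigit_def by simp

lemma floor_pow2_Suc_mult:
  assumes "x \<ge> 0"
  shows "\<lfloor>2 ^ Suc n * x\<rfloor> = 2 * \<lfloor>2 ^ n * x\<rfloor> + int (bdigit (Suc n) x)"
proof -
  define k where "k = \<lfloor>2 ^ n * x\<rfloor>"
  have "of_int k \<le> 2 ^ n * x" "2 ^ n * x < of_int k + 1"
    unfolding k_def by linarith+
  then have "\<lfloor>2 ^ Suc n * x\<rfloor> = 2 * k \<or> \<lfloor>2 ^ Suc n * x\<rfloor> = 2 * k + 1"
    by (simp add: floor_eq_iff) linarith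
  moreover have "int (bdigit (Suc n) x) = \<lfloor>2 ^ Suc n * x\<rfloor> mod 2"
    unfolding bdigit_def using assms by (simp add: nat_mod_distrib[symmetric] zmod_int)
  ultimately show ?thesis
    unfolding k_def[symmetric] by auto
qed

lemma sum_bdigit_eq_floor:
  assumes "0 \<le> x" "x < 1"
  shows "(\<Sum>i<n. real (bdigit (Suc i) x) / 2 ^ Suc i) = \<lfloor>2 ^ n * x\<rfloor> / 2 ^ n"
proof (induction n)
  case 0
  then show ?case using assms by (simp add: floor_eq_iff)
next
  case (Suc n)
  have "(\<Sum>i<Suc n. real (bdigit (Suc i) x) / 2 ^ Suc i)
      = (2 * \<lfloor>2 ^ n * x\<rfloor> + int (bdigit (Suc n) x)) / 2 ^ Suc n"
    using Suc by (simp add: field_simps)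
  also have "\<dots> = \<lfloor>2 ^ Suc n * x\<rfloor> / 2 ^ Suc n"
    using floor_pow2_Suc_mult[of x n] assms by simp
  finally show ?case .
qed

lemma bdigit_sums:
  assumes "0 \<le> x" "x < 1"
  shows "(\<lambda>i. real (bdigit (Suc i) x) / 2 ^ Suc i) sums x"
proof -
  have "(\<lambda>n. \<lfloor>2 ^ n * x\<rfloor> / 2 ^ n) \<longlonglongrightarrow> x"
  proof (rule tendsto_sandwich[where f="\<lambda>n. x - 1 / 2 ^ n" and h="\<lambda>n. x"])
    have "x - 1 / 2 ^ n \<le> \<lfloor>2 ^ n * x\<rfloor> / 2 ^ n" for n :: nat
    proof -
      have "(2 ^ n * x - 1) / 2 ^ n \<le> \<lfloor>2 ^ n * x\<rfloor> / 2 ^ n"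
        by (intro divide_right_mono) (linarith, simp)
      then show ?thesis by (simp add: field_simps)
    qed
    then show "\<forall>\<^sub>F n in sequentially. x - 1 / 2 ^ n \<le> \<lfloor>2 ^ n * x\<rfloor> / 2 ^ n"
      by simp
    have "\<lfloor>2 ^ n * x\<rfloor> / 2 ^ n \<le> x" for n :: nat
      by (simp add: field_simps)
    then show "\<forall>\<^sub>F n in sequentially. \<lfloor>2 ^ n * x\<rfloor> / 2 ^ n \<le> x"
      by simp
    have "(\<lambda>n. 1 / (2::real) ^ n) \<longlonglongrightarrow> 0"
      using LIMSEQ_inverse_realpow_zero[of "2::real"] by (simp add: inverse_eq_divide)
    from tendsto_diff[OF tendsto_const this] show "(\<lambda>n. x - 1 / 2 ^ n) \<longlonglongrightarrow> x"
      by simp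
  qed simp
  then show ?thesis
    unfolding sums_def using sum_bdigit_eq_floor[OF assms] by simp
qed

lemma sum_inverse_pow2: "(\<Sum>i<m. 1 / (2::real) ^ Suc i) = 1 - 1 / 2 ^ m"
  by (induction m) (auto simp: field_simps)

lemma ex_bdigit_eq_0:
  assumes "0 \<le> x" "x < 1"
  shows "\<exists>m. bdigit (Suc m) x = 0"
proof (rule ccontr)
  assume "\<not> ?thesis"
  then have "bdigit (Suc i) x = 1" for i
    using bdigit_le_1 by (metis le_antisym less_one not_le)
  then have "(\<lambda>i. 1 / (2::real) ^ Suc i) sums x"
    using bdigit_sums[OF assms] by simp
  moreover have "(\<lambda>i. 1 / (2::real) ^ Suc i) sums 1"
    using power_half_series by (simp add: power_one_over)
  ultimately show False
    using sums_unique2 assms by force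
qed

lemma bdigit_lead_ones:
  assumes "0 \<le> x" "x < 1"
  shows "bdigit (Suc (lead_ones x)) x = 0"
  unfolding lead_ones_def using ex_bdigit_eq_0[OF assms] by (rule LeastI_ex)

lemma bdigit_less_lead_ones:
  assumes "i < lead_ones x"
  shows "bdigit (Suc i) x = 1"
proof -
  have "bdigit (Suc i) x \<noteq> 0"
    using not_less_Least assms unfolding lead_ones_def by blast
  then show ?thesis using bdigit_le_1[of "Suc i" x] by linarith
qed

text \<open>The odometer adds \<open>1/2\<close> with carry to the right: with \<open>m = lead_ones x\<close> it
  subtracts \<open>1/2 + \<dots> + 1/2^m\<close> and adds \<open>1/2^(m+1)\<close>.\<close>

lemma odometer_eq:
  assumes "0 \<le> x" "x < 1"
  shows "odometer x = x - 1 + 3 / 2 ^ Suc (lead_ones x)"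
proof -
  define m where "m = lead_ones x"
  define d where "d i = real (odo_digit x (Suc i)) / 2 ^ Suc i - real (bdigit (Suc i) x) / 2 ^ Suc i" for i
  have "d sums (\<Sum>i<Suc m. d i)"
    by (rule sums_finite) (auto simp: d_def odo_digit_def m_def)
  moreover have "(\<Sum>i<Suc m. d i) = - (\<Sum>i<m. 1 / (2::real) ^ Suc i) + 1 / 2 ^ Suc m"
  proof -
    have "(\<Sum>i<m. d i) = (\<Sum>i<m. - (1 / (2::real) ^ Suc i))"
      by (rule sum.cong) (auto simp: d_def odo_digit_def m_def bdigit_less_lead_ones)
    moreover have "d m = 1 / 2 ^ Suc m"
      using bdigit_lead_ones[OF assms] by (simp add: d_def odo_digit_def m_def)
    ultimately show ?thesis by (simp add: sum_negf)
  qed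
  moreover have "- (\<Sum>i<m. 1 / (2::real) ^ Suc i) + 1 / 2 ^ Suc m = - 1 + 3 / 2 ^ Suc m"
    unfolding sum_inverse_pow2 by (simp add: field_simps)
  ultimately have "d sums (- 1 + 3 / 2 ^ Suc m)"
    by simp
  from sums_add[OF bdigit_sums[OF assms] this]
  have "(\<lambda>i. real (odo_digit x (Suc i)) / 2 ^ Suc i) sums (x + (- 1 + 3 / 2 ^ Suc m))"
    by (simp add: d_def)
  then show ?thesis
    unfolding odometer_def m_def by (simp add: sums_iff)
qed

lemma lead_ones_bounds:
  assumes "0 \<le> x" "x < 1"
  shows "1 - 1 / 2 ^ lead_ones x \<le> x" "x < 1 - 1 / 2 ^ Suc (lead_ones x)"
proof -
  define m where "m = lead_ones x"
  have "(\<Sum>i<Suc m. real (bdigit (Suc i) x) / 2 ^ Suc i) = (\<Sum>i<m. 1 / (2::real) ^ Suc i)"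
    using bdigit_lead_ones[OF assms] bdigit_less_lead_ones[of _ x] by (simp add: m_def)
  then have "\<lfloor>2 ^ Suc m * x\<rfloor> / 2 ^ Suc m = 1 - 1 / (2::real) ^ m"
    using sum_bdigit_eq_floor[OF assms, of "Suc m"] sum_inverse_pow2 by simp
  then have "\<lfloor>2 ^ Suc m * x\<rfloor> = (2::real) ^ Suc m - 2"
    by (simp add: field_simps)
  moreover have "\<lfloor>2 ^ Suc m * x\<rfloor> \<le> 2 ^ Suc m * x" "2 ^ Suc m * x < \<lfloor>2 ^ Suc m * x\<rfloor> + 1"
    by linarith+
  ultimately have "2 ^ Suc m - 2 \<le> 2 ^ Suc m * x" "2 ^ Suc m * x < 2 ^ Suc m - 1"
    by linarith+
  then have "(2 ^ Suc m - 2) / 2 ^ Suc m \<le> x" "x < (2 ^ Suc m - 1) / 2 ^ Suc m"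
    by (simp_all add: field_simps)
  then show "1 - 1 / 2 ^ lead_ones x \<le> x" "x < 1 - 1 / 2 ^ Suc (lead_ones x)"
    unfolding m_def[symmetric] by (simp_all add: field_simps)
qed

lemma odometer_in_unit:
  assumes "0 \<le> x" "x < 1"
  shows "0 \<le> odometer x \<and> odometer x < 1"
proof -
  define e where "e = 1 / (2::real) ^ lead_ones x"
  have "0 < e" "e \<le> 1"
    by (simp_all add: e_def)
  moreover have "odometer x = x - 1 + 3 / 2 * e" "1 - e \<le> x" "x < 1 - e / 2"
    using odometer_eq[OF assms] lead_ones_bounds[OF assms] by (simp_all add: e_def)
  ultimately show ?thesis by linarith
qed

lemma funpow_odometer_in_unit:
  assumes "0 \<le> x" "x < 1"
  shows "0 \<le> (odometer ^^ k) x \<and> (odometer ^^ k) x < 1"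
  by (induction k) (use assms odometer_in_unit in auto)

lemma odometer_lower_half:
  assumes "0 \<le> x" "x < 1 / 2"
  shows "odometer x = x + 1 / 2"
proof -
  have "bdigit (Suc 0) x = 0"
    using assms by (simp add: bdigit_def floor_eq_iff)
  then have "lead_ones x = 0"
    unfolding lead_ones_def by (simp add: Least_eq_0)
  then show ?thesis
    using odometer_eq[of x] assms by simp
qed

lemma bdigit_double_minus_1:
  assumes "1 / 2 \<le> x" "x < 1"
  shows "bdigit (Suc i) (2 * x - 1) = bdigit (Suc (Suc i)) x"
proof -
  have "2 ^ Suc i * (2 * x - 1) = 2 ^ Suc (Suc i) * x - of_int (2 ^ Suc i)"
    by (simp add: algebra_simps)
  then have f: "\<lfloor>2 ^ Suc i * (2 * x - 1)\<rfloor> = \<lfloor>2 ^ Suc (Suc i) * x\<rfloor> - 2 ^ Suc i"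
    by (metis floor_diff_of_int)
  have "\<lfloor>2 ^ Suc i * (2 * x - 1)\<rfloor> mod 2 = \<lfloor>2 ^ Suc (Suc i) * x\<rfloor> mod 2"
    unfolding f by (simp add: mod_diff_eq[symmetric])
  moreover have "0 \<le> \<lfloor>2 ^ Suc i * (2 * x - 1)\<rfloor>" "0 \<le> \<lfloor>2 ^ Suc (Suc i) * x\<rfloor>"
    using assms by simp_all
  ultimately show ?thesis
    unfolding bdigit_def by (metis nat_mod_distrib nat_numeral zero_le_numeral)
qed

lemma lead_ones_upper_half:
  assumes "1 / 2 \<le> x" "x < 1"
  shows "lead_ones x = Suc (lead_ones (2 * x - 1))"
proof -
  have "\<lfloor>2 * x\<rfloor> = 1"
    using assms by (simp add: floor_eq_iff)
  then have "bdigit (Suc 0) x \<noteq> 0"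
    by (simp add: bdigit_def)
  then have "(LEAST m. bdigit (Suc m) x = 0) = Suc (LEAST m. bdigit (Suc (Suc m)) x = 0)"
    by (intro Least_Suc2[where n="Suc (lead_ones (2 * x - 1))"])
      (use bdigit_lead_ones[of "2*x-1"] bdigit_double_minus_1[OF assms] assms in auto)
  then show ?thesis
    unfolding lead_ones_def using bdigit_double_minus_1[OF assms] by simp
qed

lemma odometer_upper_half:
  assumes "1 / 2 \<le> x" "x < 1"
  shows "odometer x = odometer (2 * x - 1) / 2"
  using odometer_eq[of x] odometer_eq[of "2 * x - 1"] lead_ones_upper_half[OF assms] assms
  by simp

text \<open>On \<open>[0, 1/2)\<close> the square of the odometer is the odometer conjugated by \<open>x \<mapsto> x/2\<close>;
  this self-similarity drives the whole tower structure.\<close>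

lemma odometer_square_half:
  assumes "0 \<le> w" "w < 1"
  shows "(odometer ^^ 2) (w / 2) = odometer w / 2"
proof -
  have "2 * ((w + 1) / 2) - 1 = w"
    by (simp add: field_simps)
  then have upper: "odometer ((w + 1) / 2) = odometer w / 2"
    using odometer_upper_half[of "(w + 1) / 2"] assms by simp
  have "(odometer ^^ 2) (w / 2) = odometer (odometer (w / 2))"
    by (simp add: numeral_2_eq_2)
  also have "odometer (w / 2) = (w + 1) / 2"
    using odometer_lower_half[of "w / 2"] assms by simp
  finally show ?thesis
    unfolding upper .
qed

lemma funpow_odometer_double:
  assumes "0 \<le> w" "w < 1"
  shows "(odometer ^^ (2 * k)) (w / 2) = (odometer ^^ k) w / 2"
proof (induction k)
  case (Suc k)
  have "(odometer ^^ (2 * Suc k)) (w / 2) = (odometer ^^ 2) ((odometer ^^ (2 * k)) (w / 2))"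
    by (simp only: mult_Suc_right funpow_add o_apply)
  also have "\<dots> = (odometer ^^ 2) ((odometer ^^ k) w / 2)"
    unfolding Suc.IH ..
  also have "\<dots> = (odometer ^^ Suc k) w / 2"
    using odometer_square_half funpow_odometer_in_unit[OF assms, of k] by simp
  finally show ?case .
qed simp

lemma funpow_odometer_scale:
  assumes "0 \<le> w" "w < 1"
  shows "(odometer ^^ (k * 2 ^ n)) (w / 2 ^ n) = (odometer ^^ k) w / 2 ^ n"
proof (induction n)
  case (Suc n)
  have "0 \<le> w / 2 ^ n" "w / 2 ^ n < 1"
    using assms by (simp_all add: divide_less_eq) (smt (verit) one_le_power)
  then have "(odometer ^^ (2 * (k * 2 ^ n))) ((w / 2 ^ n) / 2) = (odometer ^^ (k * 2 ^ n)) (w / 2 ^ n) / 2"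
    by (rule funpow_odometer_double)
  then show ?case
    using Suc.IH by (simp add: mult.commute mult.left_commute)
qed simp

lemma funpow_odometer_tower_range:
  assumes "0 \<le> u" "u < 1 / 2 ^ n"
  shows "0 \<le> (odometer ^^ (q * 2 ^ n)) u \<and> (odometer ^^ (q * 2 ^ n)) u < 1 / 2 ^ n"
proof -
  have "0 \<le> 2 ^ n * u" "2 ^ n * u < 1"
    using assms by (simp_all add: field_simps)
  from funpow_odometer_scale[OF this, of q n] funpow_odometer_in_unit[OF this, of q]
  show ?thesis
    by (simp add: divide_strict_right_mono)
qed

section \<open>Tower coordinates\<close>

lemma less_1_if_less_inverse_pow2: "x < 1 / 2 ^ n \<Longrightarrow> x < (1::real)"
  by (smt (verit) divide_le_eq_1 one_le_power)

lemma real_Suc_le_pow2: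
  assumes "k < (2::nat) ^ n"
  shows "real k + 1 \<le> 2 ^ n"
proof -
  have "real (k + 1) \<le> real ((2::nat) ^ n)"
    using assms by (simp only: of_nat_le_iff)
  then show ?thesis
    by simp
qed

lemma nat_floor_divide_bounds:
  assumes "0 \<le> x" "0 < P"
  shows "real (nat \<lfloor>x / P\<rfloor>) * P \<le> x" "x < real (nat \<lfloor>x / P\<rfloor>) * P + P"
proof -
  define m where "m = real (nat \<lfloor>x / P\<rfloor>)"
  have "m = \<lfloor>x / P\<rfloor>"
    using assms by (simp add: m_def)
  then have "m \<le> x / P" "x / P < m + 1"
    by linarith+
  then show "m * P \<le> x" "x < m * P + P"
    using assms by (simp_all add: pos_le_divide_eq pos_divide_less_eq algebra_simps)
qed

fun bitrev :: "nat \<Rightarrow> nat \<Rightarrow> nat" where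
  "bitrev 0 k = 0"
| "bitrev (Suc n) k = bitrev n (k div 2) + (k mod 2) * 2 ^ n"

lemma bitrev_less: "bitrev n k < 2 ^ n"
proof (induction n arbitrary: k)
  case (Suc n)
  have "(k mod 2) * 2 ^ n \<le> 1 * (2::nat) ^ n"
    by (intro mult_right_mono) auto
  with Suc[of "k div 2"] show ?case
    by (simp only: bitrev.simps power_Suc)
qed simp

lemma inj_on_bitrev: "inj_on (bitrev n) {..<2 ^ n}"
proof (induction n)
  case 0
  then show ?case by (auto simp: inj_on_def)
next
  case (Suc n)
  show ?case
  proof (rule inj_onI)
    fix k k'
    assume k: "k \<in> {..<2 ^ Suc n}" "k' \<in> {..<2 ^ Suc n}" and eq: "bitrev (Suc n) k = bitrev (Suc n) k'"
    have mod_eq: "k mod 2 = k' mod 2"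
    proof (rule ccontr)
      assume "k mod 2 \<noteq> k' mod 2"
      then have "k mod 2 = 0 \<and> k' mod 2 = 1 \<or> k mod 2 = 1 \<and> k' mod 2 = 0"
        by auto
      then show False
        using eq bitrev_less[of n "k div 2"] bitrev_less[of n "k' div 2"] by auto
    qed
    then have "bitrev n (k div 2) = bitrev n (k' div 2)"
      using eq by simp
    moreover have "k div 2 \<in> {..<2 ^ n}" "k' div 2 \<in> {..<2 ^ n}"
      using k by auto
    ultimately have "k div 2 = k' div 2"
      using Suc inj_onD by metis
    with mod_eq show "k = k'"
      by (metis div_mult_mod_eq)
  qed
qed

lemma bij_betw_bitrev: "bij_betw (bitrev n) {..<2 ^ n} {..<2 ^ n}"
proof -
  have "bitrev n ` {..<2 ^ n} \<subseteq> {..<2 ^ n}"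
    using bitrev_less by auto
  moreover have "card (bitrev n ` {..<2 ^ n}) = card {..<(2::nat) ^ n}"
    using card_image[OF inj_on_bitrev] by simp
  ultimately show ?thesis
    using inj_on_bitrev by (simp add: bij_betw_def card_subset_eq)
qed

text \<open>Adding \<open>1/2\<close> with carry to the right is counting with the binary digits read in
  reverse order; hence \<open>k\<close> steps from the bottom cell \<open>[0, 2^-n)\<close> translate by \<open>bitrev n k / 2^n\<close>.\<close>

lemma funpow_odometer_bottom:
  assumes "0 \<le> u" "u < 1 / 2 ^ n" "k < 2 ^ n"
  shows "(odometer ^^ k) u = u + bitrev n k / 2 ^ n"
  using assms
proof (induction n arbitrary: u k)
  case (Suc n)
  define w where "w = 2 * u"
  define a where "a = k div 2"
  have w: "0 \<le> w" "w < 1 / 2 ^ n"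
    using Suc.prems by (auto simp: w_def field_simps)
  then have "w < 1"
    by (simp add: less_1_if_less_inverse_pow2)
  have half: "(odometer ^^ (2 * a)) u = (odometer ^^ a) w / 2"
    using funpow_odometer_double[of w a] w \<open>w < 1\<close> by (simp add: w_def)
  have "(odometer ^^ a) w = w + bitrev n a / 2 ^ n"
    using Suc.IH w Suc.prems by (simp add: a_def)
  then have even: "(odometer ^^ (2 * a)) u = u + bitrev n a / 2 ^ Suc n"
    unfolding half by (simp add: w_def field_simps)
  show ?case
  proof (cases "even k")
    case True
    then show ?thesis
      using even by (simp add: a_def)
  next
    case False
    then have k: "k = Suc (2 * a)"
      by (simp add: a_def)
    have "0 \<le> (odometer ^^ a) w" "(odometer ^^ a) w < 1"
      using funpow_odometer_in_unit w \<open>w < 1\<close> by simp_all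
    then have "(odometer ^^ k) u = (odometer ^^ (2 * a)) u + 1 / 2"
      using odometer_lower_half half by (simp add: k)
    moreover have "bitrev (Suc n) k = bitrev n a + 2 ^ n"
      using False by (simp add: a_def odd_iff_mod_2_eq_one)
    ultimately show ?thesis
      using even by (simp add: add_divide_distrib)
  qed
qed simp

lemma nat_floor_less_pow2:
  assumes "0 \<le> v" "v < 2 ^ n"
  shows "nat \<lfloor>v\<rfloor> < (2::nat) ^ n"
proof -
  have "\<lfloor>v\<rfloor> < 2 ^ n"
    using assms by (metis floor_less_iff of_int_numeral of_int_power)
  then show ?thesis
    using assms by (simp add: nat_less_iff)
qed

lemma Phi_Rect:
  fixes u v :: real
  assumes "(u, v) \<in> Rect n"
  shows "Phi n (u, v) = (u + bitrev n (nat \<lfloor>v\<rfloor>) / 2 ^ n, v - \<lfloor>v\<rfloor>)"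
  using assms funpow_odometer_bottom[of u n "nat \<lfloor>v\<rfloor>"] nat_floor_less_pow2[of v n]
  by (simp add: Phi_def Rect_def)

lemma inj_on_Phi: "inj_on (Phi n) (Rect n)"
proof (rule inj_onI)
  fix p p'
  assume p: "p \<in> Rect n" and p': "p' \<in> Rect n" and eq: "Phi n p = Phi n p'"
  obtain u v u' v' where uv: "p = (u, v)" "p' = (u', v')"
    by (cases p, cases p')
  define k k' where "k = nat \<lfloor>v\<rfloor>" and "k' = nat \<lfloor>v'\<rfloor>"
  have bounds: "0 \<le> 2 ^ n * u" "2 ^ n * u < 1" "0 \<le> 2 ^ n * u'" "2 ^ n * u' < 1"
    "0 \<le> v" "v < 2 ^ n" "0 \<le> v'" "v' < 2 ^ n"
    using p p' uv by (auto simp: Rect_def field_simps)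
  have fst_eq: "u + bitrev n k / 2 ^ n = u' + bitrev n k' / 2 ^ n"
    and frac_eq: "v - \<lfloor>v\<rfloor> = v' - \<lfloor>v'\<rfloor>"
    using eq Phi_Rect p p' uv by (auto simp: k_def k'_def)
  then have "2 ^ n * u + bitrev n k = 2 ^ n * u' + bitrev n k'"
    by (simp add: field_simps)
  then have "\<lfloor>2 ^ n * u + bitrev n k\<rfloor> = \<lfloor>2 ^ n * u' + bitrev n k'\<rfloor>"
    by simp
  moreover have "\<lfloor>2 ^ n * u\<rfloor> = 0" "\<lfloor>2 ^ n * u'\<rfloor> = 0"
    using bounds by (simp_all add: floor_eq_iff)
  ultimately have "bitrev n k = bitrev n k'"
    by simp
  moreover have "k \<in> {..<2 ^ n}" "k' \<in> {..<2 ^ n}"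
    using nat_floor_less_pow2 bounds by (auto simp: k_def k'_def)
  ultimately have "k = k'"
    using inj_on_bitrev inj_onD by metis
  then have "u = u'" "\<lfloor>v\<rfloor> = \<lfloor>v'\<rfloor>"
    using fst_eq bounds unfolding k_def k'_def by (auto simp: eq_nat_nat_iff)
  then show "p = p'"
    using frac_eq uv by simp
qed

lemma Phi_in_Msp:
  assumes "p \<in> Rect n"
  shows "Phi n p \<in> Msp"
proof -
  obtain u v where uv: "p = (u, v)" and p: "(u, v) \<in> Rect n"
    using assms by (cases p) auto
  define j where "j = bitrev n (nat \<lfloor>v\<rfloor>)"
  have "real j + 1 \<le> 2 ^ n"
    unfolding j_def by (rule real_Suc_le_pow2[OF bitrev_less])
  moreover have "0 \<le> u" "2 ^ n * u < 1"
    using p by (auto simp: Rect_def field_simps)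
  ultimately have "0 \<le> u + j / 2 ^ n" "u + j / 2 ^ n < 1"
    by (simp_all add: field_simps)
  moreover have "0 \<le> v - \<lfloor>v\<rfloor>" "v - \<lfloor>v\<rfloor> < 1"
    by linarith+
  ultimately show ?thesis
    using Phi_Rect[OF p] by (simp add: Msp_def j_def uv)
qed

lemma Msp_subset_Phi_image:
  assumes "z \<in> Msp"
  shows "z \<in> Phi n ` Rect n"
proof -
  obtain x y where z: "z = (x, y)" and xy: "0 \<le> x" "x < 1" "0 \<le> y" "y < 1"
    using assms by (cases z) (auto simp: Msp_def)
  define j where "j = nat \<lfloor>2 ^ n * x\<rfloor>"
  have "real j = \<lfloor>2 ^ n * x\<rfloor>"
    using xy by (simp add: j_def)
  then have j: "real j \<le> 2 ^ n * x" "2 ^ n * x < real j + 1"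
    by linarith+
  have "j < 2 ^ n"
    unfolding j_def using xy by (intro nat_floor_less_pow2) (auto simp: field_simps)
  then obtain k where k: "k < 2 ^ n" "bitrev n k = j"
    using bij_betw_bitrev[of n] by (metis bij_betw_iff_bijections lessThan_iff)
  define u where "u = x - j / 2 ^ n"
  have "real k + 1 \<le> 2 ^ n"
    using real_Suc_le_pow2[OF k(1)] .
  moreover have "u = (2 ^ n * x - j) / 2 ^ n"
    by (simp add: u_def field_simps)
  then have "0 \<le> u" "u < 1 / 2 ^ n"
    using j by (auto intro!: divide_strict_right_mono divide_nonneg_pos)
  ultimately have p: "(u, k + y) \<in> Rect n"
    using xy by (auto simp: Rect_def)
  have "\<lfloor>k + y\<rfloor> = int k"
    using xy by (simp add: floor_eq_iff)
  then have "Phi n (u, k + y) = (x, y)"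
    using Phi_Rect[OF p] k by (simp add: u_def)
  with p show ?thesis
    unfolding z by force
qed

lemma Phi_image_Rect: "Phi n ` Rect n = Msp"
  using Phi_in_Msp Msp_subset_Phi_image by blast

lemma Phi_inv_in_Rect: "z \<in> Msp \<Longrightarrow> Phi_inv n z \<in> Rect n"
  unfolding Phi_inv_def using Phi_image_Rect by (metis inv_into_into)

lemma Phi_Phi_inv: "z \<in> Msp \<Longrightarrow> Phi n (Phi_inv n z) = z"
  unfolding Phi_inv_def using Phi_image_Rect by (metis f_inv_into_f)

lemma Phi_inv_Phi: "p \<in> Rect n \<Longrightarrow> Phi_inv n (Phi n p) = p"
  unfolding Phi_inv_def using inj_on_Phi by (metis inv_into_f_f)

lemma flow_eq_Phi: "flow s (x, y) = Phi n (x, y + s)"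
  by (simp add: flow_def Phi_def)

lemma Phi_funpow_odometer:
  assumes "0 \<le> w"
  shows "Phi n ((odometer ^^ k) u, w) = Phi n (u, w + k)"
proof -
  have "\<lfloor>w + k\<rfloor> = \<lfloor>w\<rfloor> + int k"
    by (metis floor_add_int of_int_of_nat_eq)
  moreover have "0 \<le> \<lfloor>w\<rfloor>"
    using assms by simp
  ultimately have "nat \<lfloor>w + k\<rfloor> = nat \<lfloor>w\<rfloor> + k"
    by (simp add: nat_add_distrib)
  then show ?thesis
    by (simp add: Phi_def funpow_add \<open>\<lfloor>w + k\<rfloor> = _\<close>)
qed

lemma Phi_inv_flow:
  assumes z: "z \<in> Msp" and s: "0 \<le> s" and uv: "Phi_inv n z = (u, v)"
  defines "q \<equiv> nat \<lfloor>(v + s) / 2 ^ n\<rfloor>"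
  shows "Phi_inv n (flow s z) = ((odometer ^^ (q * 2 ^ n)) u, v + s - real q * 2 ^ n)"
proof -
  have p: "(u, v) \<in> Rect n"
    using Phi_inv_in_Rect[OF z, of n] uv by simp
  have q: "real q * 2 ^ n \<le> v + s" "v + s < real q * 2 ^ n + 2 ^ n"
    using nat_floor_divide_bounds[of "v + s" "2 ^ n"] p s by (auto simp: q_def Rect_def)
  have "flow s z = flow s ((odometer ^^ nat \<lfloor>v\<rfloor>) u, v - \<lfloor>v\<rfloor>)"
    using Phi_Phi_inv[OF z, of n] uv by (simp add: Phi_def)
  also have "\<dots> = Phi n (u, v + s)"
    using Phi_funpow_odometer[of "v - \<lfloor>v\<rfloor> + s" n "nat \<lfloor>v\<rfloor>" u] p s
    by (simp add: flow_eq_Phi[of _ _ _ n] Rect_def)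
  also have "\<dots> = Phi n ((odometer ^^ (q * 2 ^ n)) u, v + s - real q * 2 ^ n)"
    using Phi_funpow_odometer[of "v + s - real q * 2 ^ n" n "q * 2 ^ n" u] q by simp
  finally have "flow s z = Phi n ((odometer ^^ (q * 2 ^ n)) u, v + s - real q * 2 ^ n)" .
  moreover have "((odometer ^^ (q * 2 ^ n)) u, v + s - real q * 2 ^ n) \<in> Rect n"
    using funpow_odometer_tower_range[of u n q] p q by (auto simp: Rect_def)
  ultimately show ?thesis
    using Phi_inv_Phi by simp
qed

section \<open>Lebesgue measure in tower coordinates\<close>

lemma
  fixes t :: "'a::euclidean_space"
  shows distr_lebesgue_translation: "distr lebesgue lebesgue (\<lambda>x. t + x) = lebesgue"
    and lebesgue_translation_measurable: "(\<lambda>x. t + x) \<in> lebesgue \<rightarrow>\<^sub>M lebesgue"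
proof -
  have T: "(\<lambda>x. t + (\<Sum>j\<in>Basis. (1 * (x \<bullet> j)) *\<^sub>R j)) = (\<lambda>x::'a. t + x)"
    by (simp add: euclidean_representation)
  show "(\<lambda>x. t + x) \<in> lebesgue \<rightarrow>\<^sub>M lebesgue"
    using lebesgue_affine_measurable[where c="\<lambda>_. 1" and t=t] unfolding T by simp
  have "lebesgue = density (distr lebesgue lebesgue (\<lambda>x::'a. t + x)) (\<lambda>_. 1)"
    using lebesgue_affine_euclidean[where c="\<lambda>_. 1" and t=t] unfolding T by simp
  then show "distr lebesgue lebesgue (\<lambda>x. t + x) = lebesgue"
    by (simp add: density_1)
qed

lemma
  fixes g :: "'a::euclidean_space \<Rightarrow> real"
  assumes "integrable lebesgue g"
  shows integrable_lebesgue_translation: "integrable lebesgue (\<lambda>x. g (t + x))"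
    and integral_lebesgue_translation: "integral\<^sup>L lebesgue (\<lambda>x. g (t + x)) = integral\<^sup>L lebesgue g"
proof -
  have g: "g \<in> borel_measurable lebesgue"
    using assms by simp
  show "integrable lebesgue (\<lambda>x. g (t + x))"
    using assms integrable_distr_eq[OF lebesgue_translation_measurable g]
    unfolding distr_lebesgue_translation by simp
  show "integral\<^sup>L lebesgue (\<lambda>x. g (t + x)) = integral\<^sup>L lebesgue g"
    using integral_distr[OF lebesgue_translation_measurable g]
    unfolding distr_lebesgue_translation by simp
qed

lemma sets_lebesgue_Times:
  fixes A B :: "real set"
  assumes "A \<in> sets borel" "B \<in> sets borel"
  shows "A \<times> B \<in> sets lebesgue"
proof -
  have "A \<times> B \<in> sets (lborel \<Otimes>\<^sub>M (lborel :: real measure))"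
    using assms by auto
  then show ?thesis
    unfolding lborel_prod by simp
qed

lemma null_sets_Times_UNIV:
  assumes "B \<in> null_sets (lborel :: real measure)"
  shows "B \<times> (UNIV :: real set) \<in> null_sets lborel"
proof -
  have "B \<times> UNIV \<in> sets (lborel \<Otimes>\<^sub>M (lborel :: real measure))"
    using assms by auto
  moreover have "emeasure (lborel \<Otimes>\<^sub>M lborel) (B \<times> (UNIV :: real set)) = 0"
    using assms by (subst lborel.emeasure_pair_measure_Times) auto
  ultimately show ?thesis
    unfolding lborel_prod by (simp add: null_sets_def)
qed

lemma Msp_lebesgue: "Msp \<in> sets lebesgue"
  unfolding Msp_def by (rule sets_lebesgue_Times) auto

text \<open>\<open>Phi n\<close> maps the \<open>k\<close>-th unit level of \<open>Rect n\<close> onto the column \<open>Msp_column n k\<close> by the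
  translation \<open>level_shift n k\<close>.\<close>

definition Rect_level :: "nat \<Rightarrow> nat \<Rightarrow> (real \<times> real) set" where
  "Rect_level n k = {0..<1 / 2 ^ n} \<times> {real k..<real k + 1}"

definition Msp_column :: "nat \<Rightarrow> nat \<Rightarrow> (real \<times> real) set" where
  "Msp_column n k = {bitrev n k / 2 ^ n ..< bitrev n k / 2 ^ n + 1 / 2 ^ n} \<times> {0..<1}"

definition level_shift :: "nat \<Rightarrow> nat \<Rightarrow> real \<times> real" where
  "level_shift n k = (bitrev n k / 2 ^ n, - real k)"

lemma Rect_level_iff:
  assumes "k < 2 ^ n"
  shows "p \<in> Rect_level n k \<longleftrightarrow> p \<in> Rect n \<and> nat \<lfloor>snd p\<rfloor> = k"
proof -
  obtain u v where p: "p = (u, v)"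
    by (cases p)
  have level: "real k \<le> v \<and> v < real k + 1 \<longleftrightarrow> 0 \<le> v \<and> nat \<lfloor>v\<rfloor> = k"
    by (auto simp: floor_eq_iff) linarith+
  then have "v < 2 ^ n" if "0 \<le> v" "nat \<lfloor>v\<rfloor> = k"
    using that real_Suc_le_pow2[OF assms] by auto
  with level show ?thesis
    by (auto simp: Rect_level_def Rect_def p)
qed

lemma Msp_column_iff:
  assumes "k < 2 ^ n"
  shows "z \<in> Msp_column n k \<longleftrightarrow> z \<in> Msp \<and> bitrev n k = nat \<lfloor>2 ^ n * fst z\<rfloor>"
proof -
  obtain x y where z: "z = (x, y)"
    by (cases z)
  have "x \<in> {bitrev n k / 2 ^ n ..< bitrev n k / 2 ^ n + 1 / 2 ^ n}
      \<longleftrightarrow> real (bitrev n k) \<le> 2 ^ n * x \<and> 2 ^ n * x < real (bitrev n k) + 1"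
    by (auto simp: field_simps)
  also have "\<dots> \<longleftrightarrow> \<lfloor>2 ^ n * x\<rfloor> = int (bitrev n k)"
    by (simp add: floor_eq_iff)
  finally have x: "x \<in> {bitrev n k / 2 ^ n ..< bitrev n k / 2 ^ n + 1 / 2 ^ n}
      \<longleftrightarrow> \<lfloor>2 ^ n * x\<rfloor> = int (bitrev n k)" .
  have "real (bitrev n k) + 1 \<le> 2 ^ n"
    using real_Suc_le_pow2[OF bitrev_less] .
  then have "0 \<le> x \<and> x < 1" if "\<lfloor>2 ^ n * x\<rfloor> = int (bitrev n k)"
  proof -
    have "real (bitrev n k) \<le> 2 ^ n * x" "2 ^ n * x < real (bitrev n k) + 1"
      using that by (simp_all add: floor_eq_iff)
    then have "2 ^ n * 0 \<le> 2 ^ n * x" "2 ^ n * x < 2 ^ n * 1"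
      using \<open>real (bitrev n k) + 1 \<le> 2 ^ n\<close> by linarith+
    moreover have "(0::real) < 2 ^ n"
      by simp
    ultimately show ?thesis
      by (metis mult_le_cancel_left_pos mult_less_cancel_left_pos)
  qed
  then show ?thesis
    unfolding Msp_column_def Msp_def z using x by auto
qed

lemma level_shift_mem_Msp_column: "level_shift n k + p \<in> Msp_column n k \<longleftrightarrow> p \<in> Rect_level n k"
  by (cases p) (auto simp: level_shift_def Msp_column_def Rect_level_def)

lemma Phi_Rect_level:
  assumes "k < 2 ^ n" "p \<in> Rect_level n k"
  shows "Phi n p = level_shift n k + p"
proof -
  obtain u v where p: "p = (u, v)"
    by (cases p)
  have "(u, v) \<in> Rect n" "nat \<lfloor>v\<rfloor> = k"
    using Rect_level_iff[OF assms(1)] assms(2) p by auto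
  moreover from this have "\<lfloor>v\<rfloor> = int k"
    by (auto simp: Rect_def)
  ultimately show ?thesis
    using Phi_Rect[of u v n] p by (simp add: level_shift_def)
qed

lemma sum_indicator_Rect_level: "(\<Sum>k<2 ^ n. indicator (Rect_level n k) p) = (indicator (Rect n) p :: real)"
proof (cases "p \<in> Rect n")
  case True
  then have "nat \<lfloor>snd p\<rfloor> < 2 ^ n"
    by (intro nat_floor_less_pow2) (auto simp: Rect_def)
  moreover have "(\<Sum>k<2 ^ n. indicator (Rect_level n k) p) = (\<Sum>k<2 ^ n. if k = nat \<lfloor>snd p\<rfloor> then 1 else (0::real))"
    using Rect_level_iff True by (intro sum.cong) (auto simp: indicator_def)
  ultimately show ?thesis
    using True by simp
next
  case False
  then show ?thesis
    using Rect_level_iff by simp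
qed

lemma sum_indicator_Msp_column: "(\<Sum>k<2 ^ n. indicator (Msp_column n k) z) = (indicator Msp z :: real)"
proof (cases "z \<in> Msp")
  case True
  define j where "j = nat \<lfloor>2 ^ n * fst z\<rfloor>"
  have "j < 2 ^ n"
    unfolding j_def using True by (intro nat_floor_less_pow2) (auto simp: Msp_def field_simps)
  have "(\<Sum>k<2 ^ n. indicator (Msp_column n k) z) = (\<Sum>k<2 ^ n. (\<lambda>i. if i = j then 1 else (0::real)) (bitrev n k))"
    using Msp_column_iff True by (intro sum.cong) (auto simp: indicator_def j_def)
  also have "\<dots> = (\<Sum>i<2 ^ n. if i = j then 1 else (0::real))"
    by (rule sum.reindex_bij_betw[OF bij_betw_bitrev])
  finally show ?thesis
    using True \<open>j < 2 ^ n\<close> by simp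
next
  case False
  then show ?thesis
    using Msp_column_iff by simp
qed

lemma Msp_column_lebesgue: "Msp_column n k \<in> sets lebesgue"
  unfolding Msp_column_def by (rule sets_lebesgue_Times) auto

lemma
  fixes F :: "real \<times> real \<Rightarrow> real"
  assumes F: "integrable (lebesgue_on Msp) F"
  shows integrable_Phi_pullback: "integrable lebesgue (\<lambda>p. indicator (Rect n) p * F (Phi n p))"
    and integral_Phi_pullback:
      "integral\<^sup>L lebesgue (\<lambda>p. indicator (Rect n) p * F (Phi n p)) = integral\<^sup>L (lebesgue_on Msp) F"
proof -
  define column where "column k z = indicator (Msp_column n k) z * F z" for k z
  define level where "level k p = indicator (Rect_level n k) p * F (Phi n p)" for k p
  have F': "integrable lebesgue (\<lambda>z. indicator Msp z * F z)"
    using F Msp_lebesgue by (simp add: integrable_restrict_space)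
  have column: "integrable lebesgue (column k)" if "k < 2 ^ n" for k
  proof -
    have "Msp_column n k \<subseteq> Msp"
      using Msp_column_iff[OF that] by auto
    then have "column k = (\<lambda>z. indicator (Msp_column n k) z * (indicator Msp z * F z))"
      by (auto simp: column_def indicator_def fun_eq_iff)
    then show ?thesis
      using integrable_mult_indicator[OF Msp_column_lebesgue F'] by simp
  qed
  have level_eq: "level k = (\<lambda>p. column k (level_shift n k + p))" if "k < 2 ^ n" for k
    using level_shift_mem_Msp_column Phi_Rect_level[OF that]
    by (auto simp: level_def column_def indicator_def fun_eq_iff)
  have level: "integrable lebesgue (level k)"
    and integral_level: "integral\<^sup>L lebesgue (level k) = integral\<^sup>L lebesgue (column k)"
    if "k < 2 ^ n" for k
    using integrable_lebesgue_translation[OF column[OF that]]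
      integral_lebesgue_translation[OF column[OF that]] level_eq[OF that] by simp_all
  have Rect_sum: "(\<lambda>p. indicator (Rect n) p * F (Phi n p)) = (\<lambda>p. \<Sum>k<2 ^ n. level k p)"
    by (simp add: level_def sum_distrib_right[symmetric] sum_indicator_Rect_level)
  have Msp_sum: "(\<lambda>z. indicator Msp z * F z) = (\<lambda>z. \<Sum>k<2 ^ n. column k z)"
    by (simp add: column_def sum_distrib_right[symmetric] sum_indicator_Msp_column)
  show "integrable lebesgue (\<lambda>p. indicator (Rect n) p * F (Phi n p))"
    unfolding Rect_sum using level by auto
  have "integral\<^sup>L lebesgue (\<lambda>p. indicator (Rect n) p * F (Phi n p)) = (\<Sum>k<2 ^ n. integral\<^sup>L lebesgue (level k))"
    unfolding Rect_sum using level by (intro Bochner_Integration.integral_sum) auto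
  also have "\<dots> = (\<Sum>k<2 ^ n. integral\<^sup>L lebesgue (column k))"
    using integral_level by simp
  also have "\<dots> = integral\<^sup>L lebesgue (\<lambda>z. indicator Msp z * F z)"
    unfolding Msp_sum using column by (intro Bochner_Integration.integral_sum[symmetric]) auto
  also have "\<dots> = integral\<^sup>L (lebesgue_on Msp) F"
    using Msp_lebesgue by (simp add: integral_restrict_space)
  finally show "integral\<^sup>L lebesgue (\<lambda>p. indicator (Rect n) p * F (Phi n p)) = integral\<^sup>L (lebesgue_on Msp) F" .
qed

lemma funpow_odometer_preimage_null:
  assumes "B \<in> null_sets lborel"
  shows "\<exists>Z \<in> null_sets lborel. {u \<in> {0..<1}. (odometer ^^ k) u \<in> B} \<subseteq> Z"
proof (induction k)
  case 0
  then show ?case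
    using assms by auto
next
  case (Suc k)
  then obtain Z where Z: "Z \<in> null_sets lborel" "{u \<in> {0..<1}. (odometer ^^ k) u \<in> B} \<subseteq> Z"
    by blast
  have "{u \<in> {0..<1}. (odometer ^^ Suc k) u \<in> B} \<subseteq> (\<Union>m. {x. x - (1 - 3 / 2 ^ Suc m) \<in> Z})"
  proof
    fix u :: real
    assume "u \<in> {u \<in> {0..<1}. (odometer ^^ Suc k) u \<in> B}"
    then have u: "0 \<le> u" "u < 1" "(odometer ^^ Suc k) u \<in> B"
      by auto
    then have "odometer u \<in> Z"
      using Z(2) odometer_in_unit[of u] by (auto simp: funpow_swap1)
    moreover have "odometer u = u - (1 - 3 / 2 ^ Suc (lead_ones u))"
      using odometer_eq u by simp
    ultimately show "u \<in> (\<Union>m. {x. x - (1 - 3 / 2 ^ Suc m) \<in> Z})"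
      by auto
  qed
  moreover have "(\<Union>m. {x. x - (1 - 3 / 2 ^ Suc m) \<in> Z}) \<in> null_sets lborel"
    using Z(1) by (intro null_sets_UN null_sets_translation)
  ultimately show ?case
    by blast
qed

lemma fst_Phi_inv_preimage_null:
  assumes B: "B \<in> null_sets lborel"
  shows "\<exists>Z \<in> null_sets lborel. {z \<in> Msp. fst (Phi_inv n z) \<in> B} \<subseteq> Z"
proof -
  define Z where "Z = (\<Union>k<(2::nat) ^ n. {x. x - bitrev n k / 2 ^ n \<in> B} \<times> (UNIV :: real set))"
  have "Z \<in> null_sets lborel"
    unfolding Z_def by (intro null_sets_UN' null_sets_Times_UNIV null_sets_translation B) auto
  moreover have "{z \<in> Msp. fst (Phi_inv n z) \<in> B} \<subseteq> Z"
  proof clarify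
    fix x y
    assume z: "(x, y) \<in> Msp" "fst (Phi_inv n (x, y)) \<in> B"
    obtain u v where uv: "Phi_inv n (x, y) = (u, v)"
      by fastforce
    have p: "(u, v) \<in> Rect n"
      using Phi_inv_in_Rect[OF z(1), of n] uv by simp
    then have "nat \<lfloor>v\<rfloor> < 2 ^ n"
      by (intro nat_floor_less_pow2) (auto simp: Rect_def)
    moreover have "x = u + bitrev n (nat \<lfloor>v\<rfloor>) / 2 ^ n"
      using Phi_Phi_inv[OF z(1), of n] Phi_Rect[OF p] uv by simp
    ultimately show "(x, y) \<in> Z"
      using z uv unfolding Z_def by (intro UN_I[of "nat \<lfloor>v\<rfloor>"]) auto
  qed
  ultimately show ?thesis
    by blast
qed

lemma section_integrable_completion:
  fixes F g :: "real \<times> real \<Rightarrow> real"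
  assumes g: "g \<in> borel_measurable lborel"
    and int: "integrable lborel (\<lambda>v. g (u, v))" and ae: "AE v in lborel. F (u, v) = g (u, v)"
  shows "integrable lebesgue (\<lambda>v. F (u, v))"
    and "integral\<^sup>L lebesgue (\<lambda>v. F (u, v)) = integral\<^sup>L lborel (\<lambda>v. g (u, v))"
proof -
  have gu: "(\<lambda>v. g (u, v)) \<in> borel_measurable lborel"
    using g by measurable
  then have gu': "(\<lambda>v. g (u, v)) \<in> borel_measurable lebesgue"
    by (rule measurable_completion)
  have ae': "AE v in lebesgue. g (u, v) = F (u, v)"
    using AE_completion[OF ae] by (auto elim: AE_mp)
  have Fu: "(\<lambda>v. F (u, v)) \<in> borel_measurable lebesgue"
    by (rule borel_measurable_AE[OF gu' ae'])
  show "integrable lebesgue (\<lambda>v. F (u, v))"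
    using integrable_cong_AE_imp[OF _ Fu ae'] int integrable_completion[OF gu] by simp
  have "integral\<^sup>L lebesgue (\<lambda>v. F (u, v)) = integral\<^sup>L lebesgue (\<lambda>v. g (u, v))"
    using integral_cong_AE[OF Fu gu' AE_completion[OF ae]] .
  also have "\<dots> = integral\<^sup>L lborel (\<lambda>v. g (u, v))"
    using integral_completion[OF gu] .
  finally show "integral\<^sup>L lebesgue (\<lambda>v. F (u, v)) = integral\<^sup>L lborel (\<lambda>v. g (u, v))" .
qed

lemma integrable_lebesgue_borel_representative:
  fixes F :: "'a::euclidean_space \<Rightarrow> real"
  assumes F: "integrable lebesgue F"
  obtains g where "g \<in> borel_measurable lborel" "integrable lborel g" "AE z in lborel. F z = g z"
    "integral\<^sup>L lebesgue F = integral\<^sup>L lborel g"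
proof -
  have Fm: "F \<in> borel_measurable lebesgue"
    using F by simp
  obtain g where g: "g \<in> borel_measurable lborel" and ae: "AE z in lborel. F z = g z"
    using completion_ex_borel_measurable_real[OF Fm] by blast
  have g': "g \<in> borel_measurable lebesgue"
    using g by (rule measurable_completion)
  have "integrable lborel g"
    using integrable_cong_AE_imp[OF F g' AE_completion[OF ae]] integrable_completion[OF g] by simp
  moreover have "integral\<^sup>L lebesgue F = integral\<^sup>L lborel g"
    using integral_cong_AE[OF Fm g' AE_completion[OF ae]] integral_completion[OF g] by simp
  ultimately show ?thesis
    using that g ae by blast
qed

lemma integrable_lebesgue_AE_eq_borel:
  fixes \<phi> \<psi> :: "'a::euclidean_space \<Rightarrow> real"
  assumes \<phi>: "integrable lborel \<phi>" and ae: "AE u in lborel. \<phi> u = \<psi> u"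
  shows "integrable lebesgue \<psi>" and "integral\<^sup>L lebesgue \<psi> = integral\<^sup>L lborel \<phi>"
proof -
  have \<phi>m: "\<phi> \<in> borel_measurable lborel"
    using \<phi> by simp
  then have \<phi>m': "\<phi> \<in> borel_measurable lebesgue"
    by (rule measurable_completion)
  have ae': "AE u in lebesgue. \<phi> u = \<psi> u"
    using ae by (rule AE_completion)
  have \<psi>m: "\<psi> \<in> borel_measurable lebesgue"
    using borel_measurable_AE[OF \<phi>m' ae'] .
  show "integrable lebesgue \<psi>"
    using integrable_cong_AE_imp[OF _ \<psi>m ae'] \<phi> integrable_completion[OF \<phi>m] by simp
  show "integral\<^sup>L lebesgue \<psi> = integral\<^sup>L lborel \<phi>"
    using integral_cong_AE[OF \<phi>m' \<psi>m ae'] integral_completion[OF \<phi>m] by simp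
qed

lemma lebesgue_Fubini:
  fixes F :: "real \<times> real \<Rightarrow> real"
  assumes F: "integrable lebesgue F"
  shows "AE u in lborel. integrable lebesgue (\<lambda>v. F (u, v))"
    and "integrable lebesgue (\<lambda>u. \<integral>v. F (u, v) \<partial>lebesgue)"
    and "integral\<^sup>L lebesgue F = (\<integral>u. (\<integral>v. F (u, v) \<partial>lebesgue) \<partial>lebesgue)"
proof -
  obtain g where g: "g \<in> borel_measurable lborel" "integrable lborel g" "AE z in lborel. F z = g z"
    and integral_g: "integral\<^sup>L lebesgue F = integral\<^sup>L lborel g"
    using integrable_lebesgue_borel_representative[OF F] by blast
  have g2: "integrable (lborel \<Otimes>\<^sub>M lborel) g"
    using g(2) unfolding lborel_prod .
  have ae_sections: "AE u in lborel. integrable lborel (\<lambda>v. g (u, v)) \<and> (AE v in lborel. F (u, v) = g (u, v))"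
    using lborel_pair.AE_integrable_fst'[OF g2] lborel_pair.AE_pair[of "\<lambda>z. F z = g z"] g(3)
    unfolding lborel_prod by auto
  then show "AE u in lborel. integrable lebesgue (\<lambda>v. F (u, v))"
    by eventually_elim (use section_integrable_completion(1)[OF g(1)] in blast)
  have "AE u in lborel. (\<integral>v. g (u, v) \<partial>lborel) = (\<integral>v. F (u, v) \<partial>lebesgue)"
    using ae_sections by eventually_elim (use section_integrable_completion(2)[OF g(1)] in simp)
  note sections = integrable_lebesgue_AE_eq_borel[OF lborel_pair.integrable_fst'[OF g2] this]
  show "integrable lebesgue (\<lambda>u. \<integral>v. F (u, v) \<partial>lebesgue)"
    by (rule sections(1))
  show "integral\<^sup>L lebesgue F = (\<integral>u. (\<integral>v. F (u, v) \<partial>lebesgue) \<partial>lebesgue)"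
    using integral_g lborel_pair.integral_fst'[OF g2] sections(2) by (simp add: lborel_prod)
qed

section \<open>Integrals over consecutive periods\<close>

lemma integral_periods:
  fixes H :: "real \<Rightarrow> real"
  assumes P: "P > 0" and H: "\<And>q::nat. H integrable_on {real q * P .. real (Suc q) * P}"
  shows "H integrable_on {0 .. real d * P}
    \<and> integral {0 .. real d * P} H = (\<Sum>q<d. integral {real q * P .. real (Suc q) * P} H)"
proof (induction d)
  case (Suc d)
  have le: "0 \<le> real d * P" "real d * P \<le> real (Suc d) * P"
    using P by simp_all
  have int: "H integrable_on {0 .. real (Suc d) * P}"
    using Henstock_Kurzweil_Integration.integrable_combine[OF le] Suc H by blast
  have "integral {0 .. real (Suc d) * P} H
      = integral {0 .. real d * P} H + integral {real d * P .. real (Suc d) * P} H"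
    by (rule Henstock_Kurzweil_Integration.integral_combine[OF le int, symmetric])
  then show ?case
    using Suc int by simp
next
  case 0
  show ?case
    using integrable_on_refl[of H 0] by simp
qed

context
  fixes G :: "real \<Rightarrow> real" and P K :: real
  assumes P: "P > 0"
    and absint: "\<And>q::nat. G absolutely_integrable_on {real q * P .. real (Suc q) * P}"
    and zero_mean: "\<And>q::nat. integral {real q * P .. real (Suc q) * P} G = 0"
    and abs_bound: "\<And>q::nat. integral {real q * P .. real (Suc q) * P} (\<lambda>x. \<bar>G x\<bar>) \<le> K"
begin

lemma periodic_integrable_on_period:
  shows "G integrable_on {real q * P .. real (Suc q) * P}"
    and "(\<lambda>x. \<bar>G x\<bar>) integrable_on {real q * P .. real (Suc q) * P}"
  using absint[of q] by (simp_all add: absolutely_integrable_on_def)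

lemma periodic_integrable:
  assumes c: "0 \<le> c"
  shows "G integrable_on {c..d}" and "(\<lambda>x. \<bar>G x\<bar>) integrable_on {c..d}"
proof -
  obtain m :: nat where "d / P \<le> real m"
    using real_arch_simple by blast
  then have sub: "{c..d} \<subseteq> {0 .. real m * P}"
    using c P by (auto simp: divide_le_eq)
  show "G integrable_on {c..d}"
    using integral_periods[OF P periodic_integrable_on_period(1), of m] integrable_on_subinterval[OF _ sub]
    by blast
  show "(\<lambda>x. \<bar>G x\<bar>) integrable_on {c..d}"
    using integral_periods[OF P periodic_integrable_on_period(2), of m] integrable_on_subinterval[OF _ sub]
    by blast
qed

lemma periodic_integral_from_0:
  assumes x: "0 \<le> x"
  shows "\<bar>integral {0..x} G\<bar> \<le> K"
proof -
  define m where "m = nat \<lfloor>x / P\<rfloor>"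
  have m: "real m * P \<le> x" "x < real (Suc m) * P"
    using nat_floor_divide_bounds[OF x P] by (simp_all add: m_def algebra_simps)
  have "integral {0..x} G = integral {0 .. real m * P} G + integral {real m * P .. x} G"
    using periodic_integrable m P
    by (intro Henstock_Kurzweil_Integration.integral_combine[symmetric]) auto
  also have "integral {0 .. real m * P} G = 0"
    using integral_periods[OF P periodic_integrable_on_period(1), of m] zero_mean by simp
  finally have "\<bar>integral {0..x} G\<bar> = \<bar>integral {real m * P .. x} G\<bar>"
    by simp
  also have "\<dots> \<le> integral {real m * P .. x} (\<lambda>y. \<bar>G y\<bar>)"
    using integral_norm_bound_integral[OF periodic_integrable] m P by simp
  also have "\<dots> \<le> integral {real m * P .. real (Suc m) * P} (\<lambda>y. \<bar>G y\<bar>)"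
    using periodic_integrable m P by (intro integral_subset_le) auto
  also have "\<dots> \<le> K"
    by (rule abs_bound)
  finally show ?thesis .
qed

lemma periodic_abs_integral_from_0:
  assumes x: "0 \<le> x"
  shows "integral {0..x} (\<lambda>y. \<bar>G y\<bar>) \<le> (x / P + 1) * K"
proof -
  define m where "m = nat \<lfloor>x / P\<rfloor>"
  have m: "real m \<le> x / P" "x \<le> real (Suc m) * P"
    using nat_floor_divide_bounds[OF x P] P by (simp_all add: m_def pos_le_divide_eq algebra_simps)
  have "integral {0..x} (\<lambda>y. \<bar>G y\<bar>) \<le> integral {0 .. real (Suc m) * P} (\<lambda>y. \<bar>G y\<bar>)"
    using periodic_integrable[of 0] m by (intro integral_subset_le) auto
  also have "\<dots> = (\<Sum>q<Suc m. integral {real q * P .. real (Suc q) * P} (\<lambda>y. \<bar>G y\<bar>))"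
    by (rule conjunct2[OF integral_periods[OF P periodic_integrable_on_period(2)]])
  also have "\<dots> \<le> (\<Sum>q<Suc m. K)"
    by (rule sum_mono) (rule abs_bound)
  also have "\<dots> \<le> (x / P + 1) * K"
  proof -
    have "0 \<le> K"
      using abs_bound[of 0] integral_nonneg[OF periodic_integrable_on_period(2)[of 0]] by (meson abs_ge_zero order_trans)
    then show ?thesis
      using m(1) by (simp add: mult_right_mono)
  qed
  finally show ?thesis .
qed

text \<open>Whole periods contribute nothing, so only the two incomplete periods at the ends count.\<close>

lemma periodic_integral_bound:
  assumes ab: "0 \<le> a" "a \<le> b"
  shows "\<bar>integral {a..b} G\<bar> \<le> 2 * K"
    and "integral {a..b} (\<lambda>y. \<bar>G y\<bar>) \<le> (b / P + 1) * K"
proof -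
  have "integral {0..b} G = integral {0..a} G + integral {a..b} G"
    using ab periodic_integrable(1)[of 0 b] by (intro Henstock_Kurzweil_Integration.integral_combine[symmetric]) auto
  then show "\<bar>integral {a..b} G\<bar> \<le> 2 * K"
    using periodic_integral_from_0[of a] periodic_integral_from_0[of b] ab by linarith
  have "integral {a..b} (\<lambda>y. \<bar>G y\<bar>) \<le> integral {0..b} (\<lambda>y. \<bar>G y\<bar>)"
    using ab periodic_integrable(2)[of a b] periodic_integrable(2)[of 0 b] by (intro integral_subset_le) auto
  then show "integral {a..b} (\<lambda>y. \<bar>G y\<bar>) \<le> (b / P + 1) * K"
    using periodic_abs_integral_from_0[of b] ab by linarith
qed

end

lemma integrable_lebesgue_on_iff_absolutely_integrable:
  fixes h :: "real \<Rightarrow> real"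
  assumes "S \<in> sets lebesgue"
  shows "integrable (lebesgue_on S) h \<longleftrightarrow> h absolutely_integrable_on S"
  using assms unfolding set_integrable_def by (simp add: integrable_restrict_space)

lemma has_integral_shifted_piece:
  fixes h G :: "real \<Rightarrow> real"
  assumes h: "integrable (lebesgue_on {0..<P}) h" and G: "\<And>w. w \<in> {c..<c + P} \<Longrightarrow> G w = h (w - c)"
  shows "(G has_integral integral\<^sup>L (lebesgue_on {0..<P}) h) {c..c + P}"
proof -
  define I where "I = integral\<^sup>L (lebesgue_on {0..<P}) h"
  have neg: "negligible {x \<in> A - B. h x \<noteq> 0}" if "A - B \<subseteq> {P}" for A B
    by (rule negligible_subset[of "{P}"]) (use that in auto)
  have "{0..<P} - {0..P} \<subseteq> {P}" "{0..P} - {0..<P} \<subseteq> {P}"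
    by auto
  from has_integral_spike_set_eq[OF neg[OF this(1)] neg[OF this(2)]]
  have "(h has_integral I) {0..P}"
    using has_integral_integral_lebesgue_on[OF h] by (simp add: I_def)
  then have "(((\<lambda>w. h (w - c)) \<circ> (+) c) has_integral I) {0..P}"
    by (simp add: o_def)
  then have "((\<lambda>w. h (w - c)) has_integral I) {c..c + P}"
    using has_integral_shift_Icc_real by (metis add.commute add_0)
  then show ?thesis
    unfolding I_def by (rule has_integral_spike_finite[where S="{c + P}", rotated 2]) (use G in auto)
qed

lemma concatenated_sections_on_period:
  fixes H :: "nat \<Rightarrow> real \<Rightarrow> real"
  assumes P: "P > 0" and int: "integrable (lebesgue_on {0..<P}) (H q)"
  defines "G \<equiv> \<lambda>w. H (nat \<lfloor>w / P\<rfloor>) (w - real (nat \<lfloor>w / P\<rfloor>) * P)"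
  shows "(G has_integral integral\<^sup>L (lebesgue_on {0..<P}) (H q)) {real q * P .. real (Suc q) * P}"
    and "((\<lambda>w. \<bar>G w\<bar>) has_integral integral\<^sup>L (lebesgue_on {0..<P}) (\<lambda>r. \<bar>H q r\<bar>))
      {real q * P .. real (Suc q) * P}"
proof -
  have G_piece: "G w = H q (w - real q * P)" if "w \<in> {real q * P..<real q * P + P}" for w
  proof -
    have "real q \<le> w / P" "w / P < real q + 1"
      using that P by (auto simp: field_simps)
    then have "nat \<lfloor>w / P\<rfloor> = q"
      by linarith
    then show ?thesis
      by (simp add: G_def)
  qed
  have period: "real (Suc q) * P = real q * P + P"
    by (simp add: algebra_simps)
  show "(G has_integral integral\<^sup>L (lebesgue_on {0..<P}) (H q)) {real q * P .. real (Suc q) * P}"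
    and "((\<lambda>w. \<bar>G w\<bar>) has_integral integral\<^sup>L (lebesgue_on {0..<P}) (\<lambda>r. \<bar>H q r\<bar>))
      {real q * P .. real (Suc q) * P}"
    unfolding period
    using has_integral_shifted_piece[OF int, of "real q * P" G]
      has_integral_shifted_piece[OF integrable_abs[OF int], of "real q * P" "\<lambda>w. \<bar>G w\<bar>"] G_piece
    by simp_all
qed

text \<open>A path that runs vertically through \<open>Rect n\<close> sees the sections \<open>H q\<close> one after the other.\<close>

lemma integral_concatenated_sections:
  fixes H :: "nat \<Rightarrow> real \<Rightarrow> real"
  assumes P: "P > 0"
    and int: "\<And>q. integrable (lebesgue_on {0..<P}) (H q)"
    and zero_mean: "\<And>q. integral\<^sup>L (lebesgue_on {0..<P}) (H q) = 0"
    and abs_bound: "\<And>q. integral\<^sup>L (lebesgue_on {0..<P}) (\<lambda>r. \<bar>H q r\<bar>) \<le> K"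
    and v: "0 \<le> v" and t: "0 \<le> t"
  defines "g \<equiv> \<lambda>s. H (nat \<lfloor>(v + s) / P\<rfloor>) (v + s - real (nat \<lfloor>(v + s) / P\<rfloor>) * P)"
  shows "integrable (lebesgue_on {0..t}) g"
    and "\<bar>integral\<^sup>L (lebesgue_on {0..t}) g\<bar> \<le> 2 * K"
    and "integral\<^sup>L (lebesgue_on {0..t}) (\<lambda>s. \<bar>g s\<bar>) \<le> ((v + t) / P + 1) * K"
proof -
  define G where "G w = H (nat \<lfloor>w / P\<rfloor>) (w - real (nat \<lfloor>w / P\<rfloor>) * P)" for w
  have periods: "G absolutely_integrable_on {real q * P .. real (Suc q) * P}"
    "integral {real q * P .. real (Suc q) * P} G = 0"
    "integral {real q * P .. real (Suc q) * P} (\<lambda>w. \<bar>G w\<bar>) \<le> K" for q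
    using concatenated_sections_on_period[where H=H and q=q, OF P int, folded G_def] zero_mean[of q] abs_bound[of q]
    by (auto simp: absolutely_integrable_on_def integral_unique)
  note bounds = periodic_integral_bound[OF P periods, of v "v + t"]
  have "g = G \<circ> (+) v" "(\<lambda>s. \<bar>g s\<bar>) = (\<lambda>w. \<bar>G w\<bar>) \<circ> (+) v"
    by (simp_all add: g_def G_def fun_eq_iff)
  then have shift: "(g has_integral integral {v..v + t} G) {0..t}"
    and shift_abs: "((\<lambda>s. \<bar>g s\<bar>) has_integral integral {v..v + t} (\<lambda>w. \<bar>G w\<bar>)) {0..t}"
    using periodic_integrable[OF P periods v]
    by (simp_all add: has_integral_shift_Icc_real add.commute has_integral_integral)
  then have "g absolutely_integrable_on {0..t}"
    by (auto simp: absolutely_integrable_on_def)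
  then show g: "integrable (lebesgue_on {0..t}) g"
    by (simp add: integrable_lebesgue_on_iff_absolutely_integrable)
  show "\<bar>integral\<^sup>L (lebesgue_on {0..t}) g\<bar> \<le> 2 * K"
    using bounds(1) v t lebesgue_integral_eq_integral[OF g] integral_unique[OF shift] by simp
  show "integral\<^sup>L (lebesgue_on {0..t}) (\<lambda>s. \<bar>g s\<bar>) \<le> ((v + t) / P + 1) * K"
    using bounds(2) v t lebesgue_integral_eq_integral[OF integrable_abs[OF g]] integral_unique[OF shift_abs]
    by simp
qed

section \<open>Functions on a tower\<close>

lemma integral_section_abs_le_norm_inf_1:
  fixes h :: "real \<times> real \<Rightarrow> real"
  assumes fin: "norm_inf_1 n h < \<infinity>" and u: "u \<in> {0..<1 / 2 ^ n}"
  shows "integral\<^sup>L (lebesgue_on {0..<2 ^ n}) (\<lambda>v. \<bar>h (u, v)\<bar>) \<le> enn2real (norm_inf_1 n h)"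
proof (cases "integrable (lebesgue_on {0..<2 ^ n}) (\<lambda>v. \<bar>h (u, v)\<bar>)")
  case True
  then have "integral\<^sup>L (lebesgue_on {0..<2 ^ n}) (\<lambda>v. \<bar>h (u, v)\<bar>)
      = enn2real (\<integral>\<^sup>+ v. ennreal \<bar>h (u, v)\<bar> \<partial>(lebesgue_on {0..<2 ^ n}))"
    by (intro integral_eq_nn_integral) auto
  also have "\<dots> \<le> enn2real (norm_inf_1 n h)"
    using fin u unfolding norm_inf_1_def by (intro enn2real_mono SUP_upper) auto
  finally show ?thesis .
qed (simp add: not_integrable_integral_eq)

lemma indicator_Rect:
  "indicator (Rect n) (u, v) = (indicator {0..<1 / 2 ^ n} u * indicator {0..<2 ^ n} v :: real)"
  by (simp add: Rect_def indicator_times)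

lemma integral_Rect_section:
  fixes h :: "real \<times> real \<Rightarrow> real"
  shows "(\<integral>v. indicator (Rect n) (u, v) * h (u, v) \<partial>lebesgue)
    = indicator {0..<1 / 2 ^ n} u * integral\<^sup>L (lebesgue_on {0..<2 ^ n}) (\<lambda>v. h (u, v))"
  by (simp add: indicator_Rect integral_restrict_space mult.assoc)

lemma
  fixes h :: "real \<times> real \<Rightarrow> real"
  assumes "integrable (lebesgue_on Msp) (\<lambda>z. h (Phi_inv n z))"
  shows integrable_Rect_restriction: "integrable lebesgue (\<lambda>p. indicator (Rect n) p * h p)"
    and integral_Rect_restriction:
      "integral\<^sup>L lebesgue (\<lambda>p. indicator (Rect n) p * h p) = integral\<^sup>L (lebesgue_on Msp) (\<lambda>z. h (Phi_inv n z))"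
proof -
  have "(\<lambda>p. indicator (Rect n) p * h p) = (\<lambda>p. indicator (Rect n) p * h (Phi_inv n (Phi n p)))"
    by (auto simp: fun_eq_iff indicator_def Phi_inv_Phi)
  then show "integrable lebesgue (\<lambda>p. indicator (Rect n) p * h p)"
    and "integral\<^sup>L lebesgue (\<lambda>p. indicator (Rect n) p * h p) = integral\<^sup>L (lebesgue_on Msp) (\<lambda>z. h (Phi_inv n z))"
    using integrable_Phi_pullback[OF assms] integral_Phi_pullback[OF assms] by simp_all
qed

context
  fixes h :: "real \<times> real \<Rightarrow> real" and n :: nat
  assumes L1: "integrable (lebesgue_on Msp) (\<lambda>z. h (Phi_inv n z))"
begin

lemma AE_integrable_tower_section:
  "AE u in lborel. u \<in> {0..<1 / 2 ^ n} \<longrightarrow> integrable (lebesgue_on {0..<2 ^ n}) (\<lambda>v. h (u, v))"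
  using lebesgue_Fubini(1)[OF integrable_Rect_restriction[OF L1]]
proof eventually_elim
  case (elim u)
  then show ?case
    by (auto simp: indicator_Rect integrable_restrict_space mult.assoc split: split_indicator)
qed

lemma integral_tower_function_eq_0:
  assumes zero_mean: "\<And>u. u \<in> {0..<1 / 2 ^ n} \<Longrightarrow> integral\<^sup>L (lebesgue_on {0..<2 ^ n}) (\<lambda>v. h (u, v)) = 0"
  shows "integral\<^sup>L (lebesgue_on Msp) (\<lambda>z. h (Phi_inv n z)) = 0"
proof -
  have "(\<integral>v. indicator (Rect n) (u, v) * h (u, v) \<partial>lebesgue) = 0" for u
    using zero_mean by (cases "u \<in> {0..<1 / 2 ^ n}") (simp_all add: integral_Rect_section)
  then show ?thesis
    using lebesgue_Fubini(3)[OF integrable_Rect_restriction[OF L1]] integral_Rect_restriction[OF L1]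
    by simp
qed

lemma integral_abs_tower_function_le:
  assumes fin: "norm_inf_1 n h < \<infinity>"
  shows "integral\<^sup>L (lebesgue_on Msp) (\<lambda>z. \<bar>h (Phi_inv n z)\<bar>) \<le> enn2real (norm_inf_1 n h)"
proof -
  define K where "K = enn2real (norm_inf_1 n h)"
  have L1_abs: "integrable (lebesgue_on Msp) (\<lambda>z. \<bar>h (Phi_inv n z)\<bar>)"
    using integrable_abs[OF L1] .
  note Fubini = lebesgue_Fubini[OF integrable_Rect_restriction[OF L1_abs]]
  have "(\<integral>v. indicator (Rect n) (u, v) * \<bar>h (u, v)\<bar> \<partial>lebesgue) \<le> K * indicator {0..<1 / 2 ^ n} u" for u
    using integral_section_abs_le_norm_inf_1[OF fin, of u] integral_Rect_section[of n u "\<lambda>p. \<bar>h p\<bar>"]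
    by (cases "u \<in> {0..<1 / 2 ^ n}") (simp_all add: K_def)
  then have "(\<integral>u. (\<integral>v. indicator (Rect n) (u, v) * \<bar>h (u, v)\<bar> \<partial>lebesgue) \<partial>lebesgue)
      \<le> (\<integral>u. K * indicator {0..<1 / 2 ^ n} (u::real) \<partial>lebesgue)"
    using Fubini(2) by (intro integral_mono) auto
  also have "\<dots> = K / 2 ^ n"
    by simp
  also have "\<dots> \<le> K"
    using mult_left_mono[of 1 "2 ^ n" K] by (simp add: K_def divide_le_eq)
  finally show ?thesis
    using Fubini(3) integral_Rect_restriction[OF L1_abs] by (simp add: K_def)
qed

end

lemma
  fixes a :: "nat \<Rightarrow> ennreal"
  assumes "(\<Sum>i. a i) < \<infinity>"
  shows suminf_finite_less_top: "a i < \<infinity>"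
    and summable_enn2real: "summable (\<lambda>i. enn2real (a i))"
    and enn2real_suminf: "enn2real (\<Sum>i. a i) = (\<Sum>i. enn2real (a i))"
proof -
  show fin: "a i < \<infinity>" for i
    using ennreal_suminf_lessD[OF assms] .
  have a: "ennreal (enn2real (a i)) = a i" for i
    using fin[of i] by (simp add: ennreal_enn2real_if)
  have "(\<Sum>i. ennreal (enn2real (a i))) \<noteq> top"
    using assms unfolding a by simp
  then show summable: "summable (\<lambda>i. enn2real (a i))"
    using summable_suminf_not_top[of "\<lambda>i. enn2real (a i)"] by simp
  have "(\<Sum>i. ennreal (enn2real (a i))) = ennreal (\<Sum>i. enn2real (a i))"
    using summable by (intro suminf_ennreal2) auto
  then show "enn2real (\<Sum>i. a i) = (\<Sum>i. enn2real (a i))"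
    unfolding a by (simp add: suminf_nonneg[OF summable])
qed

lemma
  fixes F :: "nat \<Rightarrow> 'a \<Rightarrow> real"
  assumes F: "\<And>i. integrable M (F i)"
    and bound: "\<And>i. (\<integral>x. \<bar>F i x\<bar> \<partial>M) \<le> K i" and K: "summable K"
  shows integrable_suminf_bounded: "integrable M (\<lambda>x. \<Sum>i. F i x)"
    and integral_suminf_bounded: "(\<integral>x. (\<Sum>i. F i x) \<partial>M) = (\<Sum>i. integral\<^sup>L M (F i))"
proof -
  have summable: "summable (\<lambda>i. \<integral>x. norm (F i x) \<partial>M)"
    using bound by (intro summable_comparison_test[OF _ K]) (auto intro!: exI[of _ 0])
  have [measurable]: "F i \<in> borel_measurable M" for i
    using F by simp
  have "(\<integral>\<^sup>+x. (\<Sum>i. ennreal (norm (F i x))) \<partial>M) = (\<Sum>i. \<integral>\<^sup>+x. ennreal (norm (F i x)) \<partial>M)"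
    by (rule nn_integral_suminf) measurable
  also have "\<dots> = (\<Sum>i. ennreal (\<integral>x. norm (F i x) \<partial>M))"
    using F by (intro suminf_cong nn_integral_eq_integral) auto
  also have "\<dots> = ennreal (\<Sum>i. \<integral>x. norm (F i x) \<partial>M)"
    using summable by (intro suminf_ennreal2) auto
  finally have "(\<integral>\<^sup>+x. (\<Sum>i. ennreal (norm (F i x))) \<partial>M) \<noteq> \<infinity>"
    by simp
  then have "AE x in M. (\<Sum>i. ennreal (norm (F i x))) \<noteq> \<infinity>"
    by (intro nn_integral_PInf_AE) measurable
  then have "AE x in M. summable (\<lambda>i. norm (F i x))"
    by eventually_elim (rule summable_suminf_not_top, auto)
  then show "integrable M (\<lambda>x. \<Sum>i. F i x)"
    and "(\<integral>x. (\<Sum>i. F i x) \<partial>M) = (\<Sum>i. integral\<^sup>L M (F i))"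
    using integrable_suminf[OF F _ summable] integral_suminf[OF F _ summable] by simp_all
qed

section \<open>Birkhoff integrals along the flow\<close>

lemma birkhoff_integral_tower_function:
  fixes h :: "real \<times> real \<Rightarrow> real"
  assumes z: "z \<in> Msp" and t: "0 \<le> t"
    and zero_mean: "\<And>u. u \<in> {0..<1 / 2 ^ n} \<Longrightarrow> integral\<^sup>L (lebesgue_on {0..<2 ^ n}) (\<lambda>v. h (u, v)) = 0"
    and fin: "norm_inf_1 n h < \<infinity>"
    and sections: "\<And>q. integrable (lebesgue_on {0..<2 ^ n})
      (\<lambda>v. h ((odometer ^^ (q * 2 ^ n)) (fst (Phi_inv n z)), v))"
  defines "K \<equiv> enn2real (norm_inf_1 n h)"
  shows "integrable (lebesgue_on {0..t}) (\<lambda>s. h (Phi_inv n (flow s z)))"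
    and "\<bar>integral\<^sup>L (lebesgue_on {0..t}) (\<lambda>s. h (Phi_inv n (flow s z)))\<bar> \<le> 2 * K"
    and "integral\<^sup>L (lebesgue_on {0..t}) (\<lambda>s. \<bar>h (Phi_inv n (flow s z))\<bar>) \<le> (t + 2) * K"
proof -
  obtain u v where uv: "Phi_inv n z = (u, v)"
    by fastforce
  have u: "0 \<le> u" "u < 1 / 2 ^ n" and v: "0 \<le> v" "v < 2 ^ n"
    using Phi_inv_in_Rect[OF z, of n] uv by (auto simp: Rect_def)
  define H where "H q = (\<lambda>r. h ((odometer ^^ (q * 2 ^ n)) u, r))" for q
  have orbit: "(odometer ^^ (q * 2 ^ n)) u \<in> {0..<1 / 2 ^ n}" for q
    using funpow_odometer_tower_range[OF u] by simp
  define g where "g s = H (nat \<lfloor>(v + s) / 2 ^ n\<rfloor>) (v + s - real (nat \<lfloor>(v + s) / 2 ^ n\<rfloor>) * 2 ^ n)" for s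
  have "integrable (lebesgue_on {0..<2 ^ n}) (H q)"
    and "integral\<^sup>L (lebesgue_on {0..<2 ^ n}) (H q) = 0"
    and "integral\<^sup>L (lebesgue_on {0..<2 ^ n}) (\<lambda>r. \<bar>H q r\<bar>) \<le> K" for q
    using sections[of q] zero_mean[OF orbit] integral_section_abs_le_norm_inf_1[OF fin orbit]
    by (simp_all add: H_def K_def uv)
  note g = integral_concatenated_sections[of "2 ^ n" H K v t, OF _ this v(1) t, folded g_def]
  have flow_eq: "h (Phi_inv n (flow s z)) = g s" if "s \<in> {0..t}" for s
    using Phi_inv_flow[OF z _ uv, of s] that by (simp add: H_def g_def)
  have "integrable (lebesgue_on {0..t}) (\<lambda>s. h (Phi_inv n (flow s z))) = integrable (lebesgue_on {0..t}) g"
    by (rule Bochner_Integration.integrable_cong) (auto simp: flow_eq)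
  moreover have "integral\<^sup>L (lebesgue_on {0..t}) (\<lambda>s. h (Phi_inv n (flow s z))) = integral\<^sup>L (lebesgue_on {0..t}) g"
    and "integral\<^sup>L (lebesgue_on {0..t}) (\<lambda>s. \<bar>h (Phi_inv n (flow s z))\<bar>) = integral\<^sup>L (lebesgue_on {0..t}) (\<lambda>s. \<bar>g s\<bar>)"
    by (rule Bochner_Integration.integral_cong; simp add: flow_eq)+
  ultimately have main: "integrable (lebesgue_on {0..t}) (\<lambda>s. h (Phi_inv n (flow s z)))
      \<and> \<bar>integral\<^sup>L (lebesgue_on {0..t}) (\<lambda>s. h (Phi_inv n (flow s z)))\<bar> \<le> 2 * K
      \<and> integral\<^sup>L (lebesgue_on {0..t}) (\<lambda>s. \<bar>h (Phi_inv n (flow s z))\<bar>) \<le> ((v + t) / 2 ^ n + 1) * K"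
    using g by simp
  have "((v + t) / 2 ^ n + 1) * K \<le> (t + 2) * K"
  proof (rule mult_right_mono)
    have "v / 2 ^ n < 1"
      using v by simp
    moreover have "t / 2 ^ n \<le> t"
      using mult_left_mono[of 1 "2 ^ n" t] t by (simp add: divide_le_eq)
    ultimately show "(v + t) / 2 ^ n + 1 \<le> t + 2"
      by (simp only: add_divide_distrib)
  qed (simp add: K_def)
  with main show "integrable (lebesgue_on {0..t}) (\<lambda>s. h (Phi_inv n (flow s z)))"
    and "\<bar>integral\<^sup>L (lebesgue_on {0..t}) (\<lambda>s. h (Phi_inv n (flow s z)))\<bar> \<le> 2 * K"
    and "integral\<^sup>L (lebesgue_on {0..t}) (\<lambda>s. \<bar>h (Phi_inv n (flow s z))\<bar>) \<le> (t + 2) * K"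
    by auto
qed

lemma AE_tower_orbits:
  assumes P: "\<And>n. AE u in lborel. P n u"
  shows "AE z in lebesgue_on Msp. z \<in> Msp \<and> (\<forall>n q. P n ((odometer ^^ (q * 2 ^ n)) (fst (Phi_inv n z))))"
proof -
  have "AE z in lborel. z \<in> Msp \<longrightarrow> P n ((odometer ^^ (q * 2 ^ n)) (fst (Phi_inv n z)))" for n q
  proof -
    obtain B where B: "B \<in> null_sets lborel" "{u. \<not> P n u} \<subseteq> B"
      using P[of n] unfolding eventually_ae_filter by auto
    obtain Z where Z: "Z \<in> null_sets lborel" "{u \<in> {0..<1}. (odometer ^^ (q * 2 ^ n)) u \<in> B} \<subseteq> Z"
      using funpow_odometer_preimage_null[OF B(1)] by blast
    obtain Z' where Z': "Z' \<in> null_sets lborel" "{z \<in> Msp. fst (Phi_inv n z) \<in> Z} \<subseteq> Z'"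
      using fst_Phi_inv_preimage_null[OF Z(1)] by blast
    have unit: "fst (Phi_inv n z) \<in> {0..<1}" if "z \<in> Msp" for z
      using Phi_inv_in_Rect[OF that, of n]
      by (auto simp: Rect_def mem_Times_iff intro: less_1_if_less_inverse_pow2)
    have "{z \<in> space lborel. \<not> (z \<in> Msp \<longrightarrow> P n ((odometer ^^ (q * 2 ^ n)) (fst (Phi_inv n z))))} \<subseteq> Z'"
    proof
      fix z
      assume "z \<in> {z \<in> space lborel. \<not> (z \<in> Msp \<longrightarrow> P n ((odometer ^^ (q * 2 ^ n)) (fst (Phi_inv n z))))}"
      then have z: "z \<in> Msp" and "(odometer ^^ (q * 2 ^ n)) (fst (Phi_inv n z)) \<in> B"
        using B(2) by auto
      then have "fst (Phi_inv n z) \<in> Z"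
        using Z(2) unit[OF z] by auto
      then show "z \<in> Z'"
        using Z'(2) z by auto
    qed
    with Z'(1) show ?thesis
      by (rule AE_I')
  qed
  then have "AE z in lborel. \<forall>n q. z \<in> Msp \<longrightarrow> P n ((odometer ^^ (q * 2 ^ n)) (fst (Phi_inv n z)))"
    unfolding AE_all_countable by blast
  then have "AE z in lebesgue. \<forall>n q. z \<in> Msp \<longrightarrow> P n ((odometer ^^ (q * 2 ^ n)) (fst (Phi_inv n z)))"
    by (rule AE_completion)
  then show ?thesis
    using Msp_lebesgue by (subst AE_restrict_space_iff) auto
qed

context
  fixes fs :: "nat \<Rightarrow> real \<times> real \<Rightarrow> real" and f :: "real \<times> real \<Rightarrow> real"
  assumes zero_mean: "\<And>n u. n \<ge> 1 \<Longrightarrow> u \<in> {0..<1 / 2 ^ n} \<Longrightarrow>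
      integral\<^sup>L (lebesgue_on {0..<2 ^ n}) (\<lambda>v. fs n (u, v)) = 0"
    and summ: "(\<Sum>n. norm_inf_1 (Suc n) (fs (Suc n))) < \<infinity>"
    and f_def: "\<And>z. f z = (\<Sum>n. fs (Suc n) (Phi_inv (Suc n) z))"
begin

lemma integrable_sum_tower_functions:
  assumes L1: "\<And>n. n \<ge> 1 \<Longrightarrow> integrable (lebesgue_on Msp) (\<lambda>z. fs n (Phi_inv n z))"
  shows "integrable (lebesgue_on Msp) f \<and> integral\<^sup>L (lebesgue_on Msp) f = 0"
proof -
  define F where "F i = (\<lambda>z. fs (Suc i) (Phi_inv (Suc i) z))" for i
  have F: "integrable (lebesgue_on Msp) (F i)" for i
    using L1 by (simp add: F_def)
  have "(\<integral>z. \<bar>F i z\<bar> \<partial>lebesgue_on Msp) \<le> enn2real (norm_inf_1 (Suc i) (fs (Suc i)))" for i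
    using integral_abs_tower_function_le[OF L1 suminf_finite_less_top[OF summ]] by (simp add: F_def)
  note sum = integrable_suminf_bounded[OF F this summable_enn2real[OF summ]]
    integral_suminf_bounded[OF F this summable_enn2real[OF summ]]
  have "integral\<^sup>L (lebesgue_on Msp) (F i) = 0" for i
    using integral_tower_function_eq_0[OF L1 zero_mean] by (simp add: F_def)
  moreover have "f = (\<lambda>z. \<Sum>i. F i z)"
    using f_def by (auto simp: F_def)
  ultimately show ?thesis
    using sum by simp
qed

lemma birkhoff_avg_bound_at:
  assumes t: "t > 0" and z: "z \<in> Msp"
    and sections: "\<And>n q. n \<ge> 1 \<Longrightarrow>
      integrable (lebesgue_on {0..<2 ^ n}) (\<lambda>v. fs n ((odometer ^^ (q * 2 ^ n)) (fst (Phi_inv n z)), v))"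
  shows "integrable (lebesgue_on {0..t}) (\<lambda>s. f (flow s z))
    \<and> \<bar>birkhoff_avg f t z\<bar> \<le> 2 * enn2real (\<Sum>n. norm_inf_1 (Suc n) (fs (Suc n))) / t"
proof -
  define K where "K = (\<lambda>i. enn2real (norm_inf_1 (Suc i) (fs (Suc i))))"
  define g where "g i s = fs (Suc i) (Phi_inv (Suc i) (flow s z))" for i s
  have K: "summable K" "enn2real (\<Sum>n. norm_inf_1 (Suc n) (fs (Suc n))) = (\<Sum>i. K i)"
    using summable_enn2real[OF summ] enn2real_suminf[OF summ] by (simp_all add: K_def)
  note layer = birkhoff_integral_tower_function[OF z _ zero_mean suminf_finite_less_top[OF summ] sections,
      folded K_def g_def, simplified]
  have f_eq: "(\<lambda>s. f (flow s z)) = (\<lambda>s. \<Sum>i. g i s)"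
    using f_def by (simp add: g_def)
  have "summable (\<lambda>i. (t + 2) * K i)"
    using K by (simp add: summable_mult)
  note sum = integrable_suminf_bounded[OF _ _ this] integral_suminf_bounded[OF _ _ this]
  have int: "integrable (lebesgue_on {0..t}) (\<lambda>s. f (flow s z))"
    unfolding f_eq using layer t by (intro sum) (auto simp: K_def)
  have "\<bar>integral\<^sup>L (lebesgue_on {0..t}) (\<lambda>s. f (flow s z))\<bar> = \<bar>\<Sum>i. integral\<^sup>L (lebesgue_on {0..t}) (g i)\<bar>"
    unfolding f_eq using layer t by (subst sum) (auto simp: K_def)
  also have "\<dots> \<le> (\<Sum>i. 2 * K i)"
    using norm_suminf_le[of "\<lambda>i. integral\<^sup>L (lebesgue_on {0..t}) (g i)" "\<lambda>i. 2 * K i"] layer t K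
    by (simp add: K_def summable_mult)
  finally show ?thesis
    using int t K by (simp add: birkhoff_avg_def divide_right_mono suminf_mult)
qed

end

theorem theorem1:
  fixes fs :: "nat \<Rightarrow> real \<times> real \<Rightarrow> real"
    and f :: "real \<times> real \<Rightarrow> real"
  assumes meas: "\<And>n. n \<ge> 1 \<Longrightarrow> fs n \<in> borel_measurable (lebesgue_on (Rect n))"
    and L1: "\<And>n. n \<ge> 1 \<Longrightarrow> integrable (lebesgue_on Msp) (\<lambda>z. fs n (Phi_inv n z))"
    and zero_mean: "\<And>n u. n \<ge> 1 \<Longrightarrow> u \<in> {0..<1 / 2 ^ n} \<Longrightarrow>
          integral\<^sup>L (lebesgue_on {0..<2 ^ n}) (\<lambda>v. fs n (u, v)) = 0"
    and summ: "(\<Sum>n. norm_inf_1 (Suc n) (fs (Suc n))) < \<infinity>"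
    and f_def: "\<And>z. f z = (\<Sum>n. fs (Suc n) (Phi_inv (Suc n) z))"
  shows "integrable (lebesgue_on Msp) f
         \<and> integral\<^sup>L (lebesgue_on Msp) f = 0
         \<and> (\<forall>t>0. AE z in lebesgue_on Msp.
              integrable (lebesgue_on {0..t}) (\<lambda>s. f (flow s z))
              \<and> \<bar>birkhoff_avg f t z\<bar>
                  \<le> 2 * enn2real (\<Sum>n. norm_inf_1 (Suc n) (fs (Suc n))) / t)"
proof -
  have "AE u in lborel. n \<ge> 1 \<longrightarrow> u \<in> {0..<1 / 2 ^ n} \<longrightarrow> integrable (lebesgue_on {0..<2 ^ n}) (\<lambda>v. fs n (u, v))"
    for n
    using AE_integrable_tower_section[OF L1] by (cases "n \<ge> 1") auto
  from AE_tower_orbits[OF this]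
  have "AE z in lebesgue_on Msp. z \<in> Msp \<and> (\<forall>n q. n \<ge> 1 \<longrightarrow>
      integrable (lebesgue_on {0..<2 ^ n}) (\<lambda>v. fs n ((odometer ^^ (q * 2 ^ n)) (fst (Phi_inv n z)), v)))"
    by eventually_elim (use funpow_odometer_tower_range Phi_inv_in_Rect in \<open>auto simp: Rect_def mem_Times_iff\<close>)
  then have "AE z in lebesgue_on Msp. integrable (lebesgue_on {0..t}) (\<lambda>s. f (flow s z))
      \<and> \<bar>birkhoff_avg f t z\<bar> \<le> 2 * enn2real (\<Sum>n. norm_inf_1 (Suc n) (fs (Suc n))) / t" if "t > 0" for t
    by eventually_elim (use birkhoff_avg_bound_at[OF zero_mean summ f_def that] in blast)
  then show ?thesis
    using integrable_sum_tower_functions[OF zero_mean summ f_def L1] by blast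
qed

end
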